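(* Let $n_1,n_2>1$ and let $\mu_j$ ($j=1,2$) be the measure $d\mu_j(r)=r^{n_j-1}dr$ on $[1,\infty)$. Let $0<\beta<n_1$, $\alpha>0$ and define $$R_1(f)(x)=x^{-\alpha}\int_x^\infty y^{-\beta}f(y)\,d\mu_1(y),\qquad x\ge1.$$ Then $R_1$ is bounded from $L^{p,1}([1,\infty),d\mu_1)$ to $L^{q,\infty}([1,\infty),d\mu_2)$ for all $1<p\le\frac{n_1}{n_1-\beta}$ and $q\ge\frac{n_2}{\alpha}$.
   Context: Lorentz spaces on a measure space $(X,\mu)$: for measurable $f$, $d_f(s)=\mu(\{|f|>s\})$, $f^*(t)=\inf\{s>0:d_f(s)\le t\}$, $\|f\|_{(p,1)}=\int_0^\infty t^{1/p}f^*(t)\frac{dt}{t}$ and $\|f\|_{(q,\infty)}=\sup_{t>0}t^{1/q}f^*(t)$; $L^{p,1}$ and $L^{q,\infty}$ are the spaces where these quantities are finite. *)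

theory Defs
  imports "HOL-Analysis.Analysis"
begin

definition radial_measure :: "real \<Rightarrow> real measure" where
  "radial_measure n = density (restrict_space lebesgue {1..}) (\<lambda>r. ennreal (r powr (n - 1)))"

definition distrib_fun :: "'a measure \<Rightarrow> ('a \<Rightarrow> real) \<Rightarrow> real \<Rightarrow> ennreal" where
  "distrib_fun M f s = emeasure M {x \<in> space M. \<bar>f x\<bar> > s}"

text \<open>Decreasing rearrangement f*(t) = inf{s > 0 : d_f(s) <= t} (inf of empty set = infinity).\<close>
definition rearrangement :: "'a measure \<Rightarrow> ('a \<Rightarrow> real) \<Rightarrow> real \<Rightarrow> ennreal" where
  "rearrangement M f t = Inf (ennreal ` {s. s > 0 \<and> distrib_fun M f s \<le> ennreal t})"

definition lorentz_p1 :: "'a measure \<Rightarrow> real \<Rightarrow> ('a \<Rightarrow> real) \<Rightarrow> ennreal" where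
  "lorentz_p1 M p f =
     (\<integral>\<^sup>+ t. indicator {0<..} t * ennreal (t powr (1 / p) / t) * rearrangement M f t \<partial>lborel)"

definition lorentz_qinf :: "'a measure \<Rightarrow> real \<Rightarrow> ('a \<Rightarrow> real) \<Rightarrow> ennreal" where
  "lorentz_qinf M q f = (SUP t\<in>{0<..}. ennreal (t powr (1 / q)) * rearrangement M f t)"

definition R1 :: "real \<Rightarrow> real \<Rightarrow> real \<Rightarrow> (real \<Rightarrow> real) \<Rightarrow> real \<Rightarrow> real" where
  "R1 n1 \<alpha> \<beta> f x = x powr (-\<alpha>) * (LINT y:{x..}|radial_measure n1. y powr (-\<beta>) * f y)"

end

theory Submission
  imports Defs
begin

(*
  Put g(y) = y^(-beta) f(y). Then |R_1 f(x)| <= x^(-alpha) ||g||_(L^1(mu_1)), and a function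
  bounded by K x^(-alpha) has weak (q,infinity)-norm at most K as soon as q >= n_2/alpha,
  because mu_2([1,B)) <= B^n_2/n_2. So it suffices to bound ||g||_1 by ||f||_(p,1).
  By the layer-cake formula ||g||_1 = int_0^infty int_{|f| > s} y^(-beta) d mu_1 ds. As y^(-beta)
  decreases, a set of mu_1-measure m carries at most C m^(1/p) <= C int_0^m t^(1/p - 1) dt of
  this weight when p <= n_1/(n_1 - beta), with C = 1 + 1/(n_1 - beta). Since d_f(s) > t forces
  f*(t) > s, Tonelli's theorem turns int_0^infty int_0^(d_f(s)) t^(1/p - 1) dt ds into at most
  int_0^infty t^(1/p - 1) f*(t) dt = ||f||_(p,1).
*)

section \<open>The radial measures\<close>

lemma space_radial_measure [simp]: "space (radial_measure n) = {1..}"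
  by (simp add: radial_measure_def)

lemma sets_radial_measure [measurable_cong]: "sets (radial_measure n) = sets (lebesgue_on {1..})"
  by (simp add: radial_measure_def)

lemma borel_measurable_radial_measure:
  "g \<in> borel_measurable borel \<Longrightarrow> g \<in> borel_measurable (radial_measure n)"
  unfolding measurable_cong_sets[OF sets_radial_measure refl]
  by (intro measurable_restrict_space1 measurable_completion) simp

lemma sets_radial_measure_Int:
  "A \<in> sets borel \<Longrightarrow> A \<inter> {1..} \<in> sets (radial_measure n)"
  by (auto simp: sets_radial_measure sets_restrict_space)

lemma atLeastLessThan_in_sets_radial_measure: "{1..<B} \<in> sets (radial_measure n)"
  using sets_radial_measure_Int[of "{..<B}" n] by (simp add: Int_commute atLeastLessThan_def)

lemma nn_integral_radial_measure:
  assumes "h \<in> borel_measurable borel"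
  shows "(\<integral>\<^sup>+ y. h y \<partial>radial_measure n)
    = (\<integral>\<^sup>+ y. ennreal (y powr (n - 1)) * h y * indicator {1..} y \<partial>lborel)"
proof -
  have "h \<in> borel_measurable (lebesgue_on {1..})"
    "(\<lambda>r. ennreal (r powr (n - 1))) \<in> borel_measurable (lebesgue_on {1..})"
    using assms by (auto intro!: measurable_restrict_space1 measurable_completion)
  then have "(\<integral>\<^sup>+ y. h y \<partial>radial_measure n) = (\<integral>\<^sup>+ y. ennreal (y powr (n - 1)) * h y \<partial>lebesgue_on {1..})"
    unfolding radial_measure_def by (simp add: nn_integral_density)
  also have "\<dots> = (\<integral>\<^sup>+ y. ennreal (y powr (n - 1)) * h y * indicator {1..} y \<partial>lebesgue)"
    by (rule nn_integral_restrict_space) simp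
  finally show ?thesis
    by (simp add: nn_integral_completion)
qed

lemma nn_integral_radial_measure_powr_le:
  assumes "b + n > 0" "B \<ge> 0"
  shows "(\<integral>\<^sup>+ y. indicator {..<B} y * ennreal (y powr b) \<partial>radial_measure n) \<le> ennreal (B powr (b + n) / (b + n))"
proof -
  have "(\<integral>\<^sup>+ y. indicator {..<B} y * ennreal (y powr b) \<partial>radial_measure n)
     = (\<integral>\<^sup>+ y. ennreal (y powr (n - 1)) * (indicator {..<B} y * ennreal (y powr b)) * indicator {1..} y \<partial>lborel)"
    by (rule nn_integral_radial_measure) simp
  also have "\<dots> \<le> (\<integral>\<^sup>+ y. ennreal (y powr (b + n - 1)) * indicator {0..B} y \<partial>lborel)"
  proof (rule nn_integral_mono)
    fix y :: real
    have "y \<ge> 1 \<Longrightarrow> y powr (n - 1) * y powr b = y powr (b + n - 1)"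
      by (simp add: powr_add [symmetric] algebra_simps)
    then show "ennreal (y powr (n - 1)) * (indicator {..<B} y * ennreal (y powr b)) * indicator {1..} y
       \<le> ennreal (y powr (b + n - 1)) * indicator {0..B} y"
      by (auto simp: indicator_def simp flip: ennreal_mult)
  qed
  also have "\<dots> = ennreal (B powr (b + n - 1 + 1) / (b + n - 1 + 1))"
  proof (rule nn_integral_has_integral_lebesgue')
    show "((\<lambda>x. x powr (b + n - 1)) has_integral B powr (b + n - 1 + 1) / (b + n - 1 + 1)) {0..B}"
      by (rule has_integral_powr_from_0) (use assms in auto)
  qed simp
  finally show ?thesis by simp
qed

lemma emeasure_radial_measure_atLeastLessThan_le:
  assumes "n > 0" "B \<ge> 0"
  shows "emeasure (radial_measure n) {1..<B} \<le> ennreal (B powr n / n)"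
proof -
  have "emeasure (radial_measure n) {1..<B} = (\<integral>\<^sup>+ y. indicator {1..<B} y \<partial>radial_measure n)"
    using atLeastLessThan_in_sets_radial_measure by simp
  also have "\<dots> = (\<integral>\<^sup>+ y. indicator {..<B} y * ennreal (y powr 0) \<partial>radial_measure n)"
    by (rule nn_integral_cong) (auto simp: indicator_def)
  also have "\<dots> \<le> ennreal (B powr (0 + n) / (0 + n))"
    by (rule nn_integral_radial_measure_powr_le) (use assms in auto)
  finally show ?thesis by simp
qed

lemma sigma_finite_radial_measure:
  assumes "n > 0"
  shows "sigma_finite_measure (radial_measure n)"
proof
  show "\<exists>A. countable A \<and> A \<subseteq> sets (radial_measure n) \<and> \<Union> A = space (radial_measure n) \<and>
      (\<forall>a\<in>A. emeasure (radial_measure n) a \<noteq> \<infinity>)"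
  proof (intro exI[of _ "range (\<lambda>k::nat. {1..<real k})"] conjI)
    show "\<Union> (range (\<lambda>k::nat. {1..<real k})) = space (radial_measure n)"
      using reals_Archimedean2 by (fastforce simp: atLeastLessThan_def)
    have "emeasure (radial_measure n) {1..<real k} \<noteq> \<infinity>" for k :: nat
      using emeasure_radial_measure_atLeastLessThan_le[OF assms, of "real k"] by (auto simp: top_unique)
    then show "\<forall>a\<in>range (\<lambda>k::nat. {1..<real k}). emeasure (radial_measure n) a \<noteq> \<infinity>"
      by blast
  qed (auto intro: atLeastLessThan_in_sets_radial_measure)
qed

section \<open>Distribution function and decreasing rearrangement\<close>

lemma distrib_fun_antimono:
  assumes "f \<in> borel_measurable M" "a \<le> b"
  shows "distrib_fun M f b \<le> distrib_fun M f a"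
  unfolding distrib_fun_def by (rule emeasure_mono) (use assms in auto)

lemma rearrangement_antimono: "t \<le> t' \<Longrightarrow> rearrangement M f t' \<le> rearrangement M f t"
  unfolding rearrangement_def
  by (intro Inf_superset_mono image_mono) (auto intro: order_trans ennreal_leI)

lemma borel_measurable_antimono_ennreal:
  fixes g :: "real \<Rightarrow> ennreal"
  assumes "\<And>x y. x \<le> y \<Longrightarrow> g y \<le> g x"
  shows "g \<in> borel_measurable borel"
proof (rule borel_measurableI_greater)
  fix c
  have "is_interval {x. c < g x}"
    unfolding is_interval_1 using assms by (blast intro: less_le_trans)
  then show "{x \<in> space borel. c < g x} \<in> sets borel"
    by (simp add: real_interval_borel_measurable)
qed

lemma distrib_fun_le_of_rearrangement_less:
  assumes "f \<in> borel_measurable M" "rearrangement M f t < ennreal s"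
  shows "distrib_fun M f s \<le> ennreal t"
proof -
  obtain s' where "s' > 0" "distrib_fun M f s' \<le> ennreal t" "ennreal s' < ennreal s"
    using assms(2) unfolding rearrangement_def by (auto simp: Inf_less_iff)
  then show ?thesis
    using distrib_fun_antimono[OF assms(1), of s' s] by (auto simp: ennreal_less_iff)
qed

lemma distrib_fun_eq_SUP:
  assumes "f \<in> borel_measurable M"
  shows "distrib_fun M f s = (SUP k. distrib_fun M f (s + inverse (Suc k)))"
proof -
  let ?A = "\<lambda>k::nat. {x \<in> space M. s + inverse (Suc k) < \<bar>f x\<bar>}"
  have "incseq ?A"
  proof (rule incseq_SucI, safe)
    fix k x assume "s + inverse (Suc k) < \<bar>f x\<bar>"
    moreover have "inverse (Suc (Suc k)) \<le> inverse (Suc k)"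
      by (rule le_imp_inverse_le) auto
    ultimately show "s + inverse (Suc (Suc k)) < \<bar>f x\<bar>"
      by linarith
  qed
  moreover have "(\<Union>k. ?A k) = {x \<in> space M. s < \<bar>f x\<bar>}"
  proof safe
    fix x assume "x \<in> space M" "s < \<bar>f x\<bar>"
    moreover obtain k where "inverse (Suc k) < \<bar>f x\<bar> - s"
      using ex_inverse_of_nat_less[of "\<bar>f x\<bar> - s"] \<open>s < \<bar>f x\<bar>\<close> by (metis Suc_pred diff_gt_0_iff_gt)
    ultimately show "x \<in> (\<Union>k. ?A k)"
      by (auto simp: algebra_simps)
  next
    fix x k assume "s + inverse (Suc k) < \<bar>f x\<bar>"
    moreover have "0 < inverse (real (Suc k))"
      by simp
    ultimately show "s < \<bar>f x\<bar>"
      by linarith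
  qed
  moreover have "range ?A \<subseteq> sets M"
    using assms by auto
  ultimately show ?thesis
    unfolding distrib_fun_def by (simp add: SUP_emeasure_incseq)
qed

lemma distrib_fun_le_of_rearrangement_le:
  assumes "f \<in> borel_measurable M" "0 \<le> s" "rearrangement M f t \<le> ennreal s"
  shows "distrib_fun M f s \<le> ennreal t"
proof -
  have "rearrangement M f t < ennreal (s + inverse (Suc k))" for k
    using assms(2,3) by (simp add: le_less_trans ennreal_lessI)
  then have "distrib_fun M f (s + inverse (Suc k)) \<le> ennreal t" for k
    by (rule distrib_fun_le_of_rearrangement_less[OF assms(1)])
  then show ?thesis
    by (subst distrib_fun_eq_SUP[OF assms(1)]) (rule SUP_least)
qed

section \<open>Layer-cake integrals\<close>

text \<open>The integral of \<open>\<phi>\<close> over \<open>(0, x)\<close>; the upper limit is extended-real so that it can be a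
  value of the distribution function.\<close>
definition nn_integral_upto :: "(real \<Rightarrow> ennreal) \<Rightarrow> ennreal \<Rightarrow> ennreal" where
  "nn_integral_upto \<phi> x = (\<integral>\<^sup>+ t. (if 0 < t \<and> ennreal t < x then \<phi> t else 0) \<partial>lborel)"

lemma nn_integral_upto_mono: "x \<le> y \<Longrightarrow> nn_integral_upto \<phi> x \<le> nn_integral_upto \<phi> y"
  unfolding nn_integral_upto_def by (rule nn_integral_mono) (auto dest: less_le_trans)

lemma nn_integral_upto_const_le: "nn_integral_upto (\<lambda>_. c) x \<le> c * x"
proof (cases x)
  case (real r)
  have "nn_integral_upto (\<lambda>_. c) x = (\<integral>\<^sup>+ s. c * indicator {0<..<r} s \<partial>lborel)"
    unfolding nn_integral_upto_def using real
    by (intro nn_integral_cong) (auto simp: indicator_def ennreal_less_iff)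
  also have "\<dots> = c * x"
    using real by (simp add: nn_integral_cmult_indicator)
  finally show ?thesis by simp
next
  case top
  then show ?thesis
    by (cases "c = 0") (simp_all add: nn_integral_upto_def ennreal_mult_top)
qed

lemma nn_integral_upto_powr_ge:
  assumes "e \<le> 0" "0 \<le> m"
  shows "ennreal (m powr (e + 1)) \<le> nn_integral_upto (\<lambda>t. ennreal (t powr e)) (ennreal m)"
proof (cases "m = 0")
  case False
  then have "m > 0" using assms by simp
  then have "ennreal (m powr (e + 1)) = (\<integral>\<^sup>+ t. ennreal (m powr e) * indicator {0<..<m} t \<partial>lborel)"
    by (simp add: powr_add ennreal_mult' nn_integral_cmult_indicator)
  also have "\<dots> \<le> nn_integral_upto (\<lambda>t. ennreal (t powr e)) (ennreal m)"
    unfolding nn_integral_upto_def using assms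
    by (intro nn_integral_mono) (auto simp: indicator_def ennreal_lessI intro!: ennreal_leI powr_mono2')
  finally show ?thesis .
qed simp

lemma nn_integral_upto_powr_top:
  assumes "e \<le> 0" "-1 < e"
  shows "nn_integral_upto (\<lambda>t. ennreal (t powr e)) \<infinity> = \<infinity>"
proof (rule ccontr)
  assume "nn_integral_upto (\<lambda>t. ennreal (t powr e)) \<infinity> \<noteq> \<infinity>"
  then obtain c where c: "nn_integral_upto (\<lambda>t. ennreal (t powr e)) \<infinity> = ennreal c" "c \<ge> 0"
    by (cases "nn_integral_upto (\<lambda>t. ennreal (t powr e)) \<infinity>") auto
  define m where "m = (c + 1) powr (1 / (e + 1))"
  have "ennreal (c + 1) = ennreal (m powr (e + 1))"
    unfolding m_def using c assms by (simp add: powr_powr)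
  also have "\<dots> \<le> nn_integral_upto (\<lambda>t. ennreal (t powr e)) (ennreal m)"
    using assms by (intro nn_integral_upto_powr_ge) (auto simp: m_def)
  also have "\<dots> \<le> nn_integral_upto (\<lambda>t. ennreal (t powr e)) \<infinity>"
    by (rule nn_integral_upto_mono) simp
  finally show False
    using c by (simp del: ennreal_plus)
qed

lemma nn_integral_layer_cake:
  fixes f w :: "'a \<Rightarrow> real"
  assumes "sigma_finite_measure M"
    and [measurable]: "f \<in> borel_measurable M" "w \<in> borel_measurable M"
  shows "(\<integral>\<^sup>+ y. ennreal \<bar>f y\<bar> * ennreal (w y) \<partial>M)
    = (\<integral>\<^sup>+ s. (\<integral>\<^sup>+ y. (if 0 < s \<and> s < \<bar>f y\<bar> then ennreal (w y) else 0) \<partial>M) \<partial>lborel)"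
proof -
  interpret pair_sigma_finite M lborel
    unfolding pair_sigma_finite_def using assms(1) sigma_finite_lborel by simp
  have "ennreal \<bar>f y\<bar> * ennreal (w y)
      = (\<integral>\<^sup>+ s. (if 0 < s \<and> s < \<bar>f y\<bar> then ennreal (w y) else 0) \<partial>lborel)" for y
  proof -
    have "(\<integral>\<^sup>+ s. (if 0 < s \<and> s < \<bar>f y\<bar> then ennreal (w y) else 0) \<partial>lborel)
        = (\<integral>\<^sup>+ s. indicator {0<..<\<bar>f y\<bar>} s * ennreal (w y) \<partial>lborel)"
      by (rule nn_integral_cong) (simp add: indicator_def)
    then show ?thesis
      by (simp add: nn_integral_multc)
  qed
  then have "(\<integral>\<^sup>+ y. ennreal \<bar>f y\<bar> * ennreal (w y) \<partial>M)
      = (\<integral>\<^sup>+ y. (\<integral>\<^sup>+ s. (if 0 < s \<and> s < \<bar>f y\<bar> then ennreal (w y) else 0) \<partial>lborel) \<partial>M)"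
    by simp
  also have "\<dots> = (\<integral>\<^sup>+ s. (\<integral>\<^sup>+ y. (if 0 < s \<and> s < \<bar>f y\<bar> then ennreal (w y) else 0) \<partial>M) \<partial>lborel)"
  proof (rule Fubini'[symmetric])
    show "(\<lambda>(y, s). if 0 < s \<and> s < \<bar>f y\<bar> then ennreal (w y) else 0) \<in> borel_measurable (M \<Otimes>\<^sub>M lborel)"
      by measurable
  qed
  finally show ?thesis .
qed

lemma nn_integral_upto_distrib_fun_le:
  assumes f: "f \<in> borel_measurable M" and [measurable]: "\<phi> \<in> borel_measurable borel"
  shows "(\<integral>\<^sup>+ s. (if 0 < s then nn_integral_upto \<phi> (distrib_fun M f s) else 0) \<partial>lborel)
     \<le> (\<integral>\<^sup>+ t. (if 0 < t then \<phi> t * rearrangement M f t else 0) \<partial>lborel)"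
proof -
  let ?R = "rearrangement M f"
  have [measurable]: "?R \<in> borel_measurable borel"
    by (rule borel_measurable_antimono_ennreal) (rule rearrangement_antimono)
  let ?F = "\<lambda>s t. if 0 < s \<and> 0 < t \<and> ennreal s < ?R t then \<phi> t else 0"
  have "ennreal s < ?R t" if "0 < s" "ennreal t < distrib_fun M f s" for s t
    using distrib_fun_le_of_rearrangement_le[OF f, of s t] that by (auto simp: not_le[symmetric])
  then have "(if 0 < s then nn_integral_upto \<phi> (distrib_fun M f s) else 0) \<le> (\<integral>\<^sup>+ t. ?F s t \<partial>lborel)" for s
    unfolding nn_integral_upto_def by (auto intro!: nn_integral_mono)
  then have "(\<integral>\<^sup>+ s. (if 0 < s then nn_integral_upto \<phi> (distrib_fun M f s) else 0) \<partial>lborel)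
     \<le> (\<integral>\<^sup>+ s. (\<integral>\<^sup>+ t. ?F s t \<partial>lborel) \<partial>lborel)"
    by (rule nn_integral_mono)
  also have "\<dots> = (\<integral>\<^sup>+ t. (\<integral>\<^sup>+ s. ?F s t \<partial>lborel) \<partial>lborel)"
    by (rule lborel_pair.Fubini'[symmetric]) measurable
  also have "\<dots> \<le> (\<integral>\<^sup>+ t. (if 0 < t then \<phi> t * ?R t else 0) \<partial>lborel)"
  proof (rule nn_integral_mono)
    fix t :: real
    have "(\<integral>\<^sup>+ s. ?F s t \<partial>lborel) = (if 0 < t then nn_integral_upto (\<lambda>_. \<phi> t) (?R t) else 0)"
      unfolding nn_integral_upto_def by simp
    then show "(\<integral>\<^sup>+ s. ?F s t \<partial>lborel) \<le> (if 0 < t then \<phi> t * ?R t else 0)"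
      using nn_integral_upto_const_le by simp
  qed
  finally show ?thesis .
qed

section \<open>The Lorentz \<open>(p,1)\<close>-norm controls a weighted \<open>L\<^sup>1\<close>-norm\<close>

lemma nn_integral_radial_powr_set_le_cutoff:
  assumes "0 \<le> \<beta>" "\<beta> < n" "0 < A" "E \<in> sets (radial_measure n)"
  shows "(\<integral>\<^sup>+ y. indicator E y * ennreal (y powr -\<beta>) \<partial>radial_measure n)
    \<le> ennreal (A powr (n - \<beta>) / (n - \<beta>)) + ennreal (A powr -\<beta>) * emeasure (radial_measure n) E"
proof -
  let ?M = "radial_measure n"
  have "indicator E y * ennreal (y powr -\<beta>)
      \<le> indicator {..<A} y * ennreal (y powr -\<beta>) + ennreal (A powr -\<beta>) * indicator E y" for y
  proof (cases "y < A")
    case False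
    then have "y powr -\<beta> \<le> A powr -\<beta>"
      using assms by (intro powr_mono2') auto
    then show ?thesis
      using False by (auto simp: indicator_def intro: ennreal_leI)
  qed (auto simp: indicator_def)
  then have "(\<integral>\<^sup>+ y. indicator E y * ennreal (y powr -\<beta>) \<partial>?M)
      \<le> (\<integral>\<^sup>+ y. indicator {..<A} y * ennreal (y powr -\<beta>) \<partial>?M) + (\<integral>\<^sup>+ y. ennreal (A powr -\<beta>) * indicator E y \<partial>?M)"
    using assms(4) by (subst nn_integral_add [symmetric])
      (auto intro!: nn_integral_mono borel_measurable_radial_measure)
  also have "(\<integral>\<^sup>+ y. indicator {..<A} y * ennreal (y powr -\<beta>) \<partial>?M) \<le> ennreal (A powr (-\<beta> + n) / (-\<beta> + n))"
    by (rule nn_integral_radial_measure_powr_le) (use assms in auto)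
  finally show ?thesis
    using assms(4) by (simp add: nn_integral_cmult_indicator)
qed

lemma nn_integral_radial_powr_set_le_powr:
  assumes "0 \<le> \<beta>" "\<beta> < n" "1 \<le> p" "p \<le> n / (n - \<beta>)"
    and E: "E \<in> sets (radial_measure n)" "emeasure (radial_measure n) E = ennreal m" "0 \<le> m"
  shows "(\<integral>\<^sup>+ y. indicator E y * ennreal (y powr -\<beta>) \<partial>radial_measure n)
    \<le> ennreal ((1 + 1 / (n - \<beta>)) * m powr (1 / p))"
proof (cases "m \<le> 1")
  case True
  have "y powr -\<beta> \<le> 1" if "y \<ge> 1" for y
    using that assms powr_mono2'[of "-\<beta>" 1 y] by simp
  then have "(\<integral>\<^sup>+ y. indicator E y * ennreal (y powr -\<beta>) \<partial>radial_measure n)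
      \<le> (\<integral>\<^sup>+ y. indicator E y \<partial>radial_measure n)"
    by (intro nn_integral_mono) (auto simp: indicator_def ennreal_le_1)
  also have "\<dots> = ennreal m"
    using E by simp
  also have "m \<le> m powr (1 / p)"
    using True assms powr_mono'[of "1 / p" 1 m] by (cases "m = 0") auto
  also have "\<dots> \<le> (1 + 1 / (n - \<beta>)) * m powr (1 / p)"
    using assms by (simp add: distrib_right)
  finally show ?thesis
    by (simp add: ennreal_leI)
next
  case False
  \<comment> \<open>\<open>A\<close> balances the two terms of the cutoff estimate.\<close>
  define A where "A = m powr (1 / n)"
  define r where "r = (n - \<beta>) / n"
  have "m > 0" "A > 0"
    using False by (auto simp: A_def)
  have An: "A powr (n - \<beta>) = m powr r"
    using \<open>m > 0\<close> by (simp add: A_def r_def powr_powr)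
  have "A powr -\<beta> * m = m powr (-\<beta> / n) * m powr 1"
    using \<open>m > 0\<close> by (simp add: A_def powr_powr)
  also have "\<dots> = m powr (-\<beta> / n + 1)"
    by (simp only: powr_add)
  also have "\<dots> = m powr r"
    using assms by (simp add: r_def diff_divide_distrib)
  finally have A\<beta>: "A powr -\<beta> * m = m powr r" .
  have "A powr (n - \<beta>) / (n - \<beta>) + A powr -\<beta> * m = (1 + 1 / (n - \<beta>)) * m powr r"
    by (simp only: An A\<beta>) (simp add: distrib_right)
  also have "\<dots> \<le> (1 + 1 / (n - \<beta>)) * m powr (1 / p)"
  proof (intro mult_left_mono powr_mono)
    show "r \<le> 1 / p"
      using assms by (simp add: r_def field_simps le_divide_eq)
  qed (use assms False in auto)
  finally have bound: "A powr (n - \<beta>) / (n - \<beta>) + A powr -\<beta> * m \<le> (1 + 1 / (n - \<beta>)) * m powr (1 / p)" .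
  have "(\<integral>\<^sup>+ y. indicator E y * ennreal (y powr -\<beta>) \<partial>radial_measure n)
      \<le> ennreal (A powr (n - \<beta>) / (n - \<beta>) + A powr -\<beta> * m)"
    using nn_integral_radial_powr_set_le_cutoff[OF assms(1,2) \<open>A > 0\<close> E(1)] E assms
    by (simp add: ennreal_plus ennreal_mult)
  also have "\<dots> \<le> ennreal ((1 + 1 / (n - \<beta>)) * m powr (1 / p))"
    using bound by (rule ennreal_leI)
  finally show ?thesis .
qed

lemma nn_integral_radial_powr_set_le:
  assumes "0 \<le> \<beta>" "\<beta> < n" "1 \<le> p" "p \<le> n / (n - \<beta>)" "E \<in> sets (radial_measure n)"
  shows "(\<integral>\<^sup>+ y. indicator E y * ennreal (y powr -\<beta>) \<partial>radial_measure n)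
    \<le> ennreal (1 + 1 / (n - \<beta>))
        * nn_integral_upto (\<lambda>t. ennreal (t powr (1 / p - 1))) (emeasure (radial_measure n) E)"
proof (cases "emeasure (radial_measure n) E")
  case (real m)
  have "(\<integral>\<^sup>+ y. indicator E y * ennreal (y powr -\<beta>) \<partial>radial_measure n)
      \<le> ennreal (1 + 1 / (n - \<beta>)) * ennreal (m powr (1 / p))"
    using nn_integral_radial_powr_set_le_powr[OF assms real(2,1)] assms by (simp add: ennreal_mult)
  also have "ennreal (m powr (1 / p)) \<le> nn_integral_upto (\<lambda>t. ennreal (t powr (1 / p - 1))) (ennreal m)"
    using nn_integral_upto_powr_ge[of "1 / p - 1" m] real assms by simp
  finally show ?thesis
    using real by (simp add: mult_left_mono)
next
  case top
  have "nn_integral_upto (\<lambda>t. ennreal (t powr (1 / p - 1))) \<infinity> = \<infinity>"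
    using assms by (intro nn_integral_upto_powr_top) (auto simp: field_simps)
  then show ?thesis
    using top assms by (simp add: ennreal_mult_top)
qed

lemma nn_integral_radial_powr_le_lorentz_p1:
  assumes "0 \<le> \<beta>" "\<beta> < n" "1 \<le> p" "p \<le> n / (n - \<beta>)"
    and f [measurable]: "f \<in> borel_measurable (radial_measure n)"
  shows "(\<integral>\<^sup>+ y. ennreal \<bar>f y\<bar> * ennreal (y powr -\<beta>) \<partial>radial_measure n)
     \<le> ennreal (1 + 1 / (n - \<beta>)) * lorentz_p1 (radial_measure n) p f"
proof -
  let ?M = "radial_measure n"
  let ?C = "ennreal (1 + 1 / (n - \<beta>))"
  let ?G = "\<lambda>s. nn_integral_upto (\<lambda>t. ennreal (t powr (1 / p - 1))) (distrib_fun ?M f s)"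
  have [measurable]: "(\<lambda>y::real. y powr -\<beta>) \<in> borel_measurable ?M"
    by (rule borel_measurable_radial_measure) simp
  have [measurable]: "?G \<in> borel_measurable borel"
    by (intro borel_measurable_antimono_ennreal nn_integral_upto_mono distrib_fun_antimono[OF f])
  have "(\<integral>\<^sup>+ y. ennreal \<bar>f y\<bar> * ennreal (y powr -\<beta>) \<partial>?M)
    = (\<integral>\<^sup>+ s. (\<integral>\<^sup>+ y. (if 0 < s \<and> s < \<bar>f y\<bar> then ennreal (y powr -\<beta>) else 0) \<partial>?M) \<partial>lborel)"
    using assms by (intro nn_integral_layer_cake sigma_finite_radial_measure) auto
  also have "\<dots> \<le> (\<integral>\<^sup>+ s. ?C * (if 0 < s then ?G s else 0) \<partial>lborel)"
  proof (rule nn_integral_mono)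
    fix s :: real
    have "(\<integral>\<^sup>+ y. (if 0 < s \<and> s < \<bar>f y\<bar> then ennreal (y powr -\<beta>) else 0) \<partial>?M)
        = (if 0 < s then \<integral>\<^sup>+ y. indicator {y \<in> space ?M. s < \<bar>f y\<bar>} y * ennreal (y powr -\<beta>) \<partial>?M else 0)"
      by (auto intro!: nn_integral_cong simp: indicator_def)
    also have "\<dots> \<le> ?C * (if 0 < s then ?G s else 0)"
    proof -
      have "{y \<in> space ?M. s < \<bar>f y\<bar>} \<in> sets ?M"
        by measurable
      from nn_integral_radial_powr_set_le[OF assms(1-4) this] show ?thesis
        by (simp add: distrib_fun_def)
    qed
    finally show "(\<integral>\<^sup>+ y. (if 0 < s \<and> s < \<bar>f y\<bar> then ennreal (y powr -\<beta>) else 0) \<partial>?M)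
        \<le> ?C * (if 0 < s then ?G s else 0)" .
  qed
  also have "\<dots> = ?C * (\<integral>\<^sup>+ s. (if 0 < s then ?G s else 0) \<partial>lborel)"
    by (rule nn_integral_cmult) measurable
  also have "\<dots> \<le> ?C * (\<integral>\<^sup>+ t. (if 0 < t then ennreal (t powr (1 / p - 1)) * rearrangement ?M f t else 0) \<partial>lborel)"
    by (intro mult_left_mono nn_integral_upto_distrib_fun_le) auto
  also have "(\<integral>\<^sup>+ t. (if 0 < t then ennreal (t powr (1 / p - 1)) * rearrangement ?M f t else 0) \<partial>lborel)
      = lorentz_p1 ?M p f"
    unfolding lorentz_p1_def by (intro nn_integral_cong) (simp add: indicator_def powr_diff)
  finally show ?thesis .
qed

section \<open>The weak-type estimate for \<open>R1\<close>\<close>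

lemma radial_level_set_subset:
  assumes "0 \<le> \<alpha>" "0 \<le> L" "0 < B" "\<And>x. 1 \<le> x \<Longrightarrow> \<bar>h x\<bar> \<le> x powr -\<alpha> * L"
  shows "{x \<in> space (radial_measure n). B powr -\<alpha> * L < \<bar>h x\<bar>} \<subseteq> {1..<B}"
proof (intro subsetI)
  fix x assume x: "x \<in> {x \<in> space (radial_measure n). B powr -\<alpha> * L < \<bar>h x\<bar>}"
  have "x < B"
  proof (rule ccontr)
    assume "\<not> x < B"
    then have "x powr -\<alpha> * L \<le> B powr -\<alpha> * L"
      using assms by (intro mult_right_mono powr_mono2') auto
    then show False
      using x assms(4)[of x] by simp
  qed
  then show "x \<in> {1..<B}"
    using x by simp
qed

lemma rearrangement_radial_powr_bound:
  assumes "1 \<le> n" "0 < \<alpha>" "n / \<alpha> \<le> q" "0 < L" "0 < t"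
    and "\<And>x. 1 \<le> x \<Longrightarrow> \<bar>h x\<bar> \<le> x powr -\<alpha> * L"
  shows "ennreal (t powr (1 / q)) * rearrangement (radial_measure n) h t \<le> ennreal L"
proof -
  let ?M = "radial_measure n"
  have "0 < n / \<alpha>"
    using assms by simp
  then have "0 < q"
    using assms(3) by linarith
  have "1 / q \<le> \<alpha> / n"
    using le_imp_inverse_le[OF assms(3) \<open>0 < n / \<alpha>\<close>] by (simp add: inverse_eq_divide)
  \<comment> \<open>\<open>B\<close> is chosen so that \<open>emeasure ?M {1..<B} \<le> t\<close>.\<close>
  define B where "B = max 1 (n * t) powr (1 / n)"
  define s where "s = B powr -\<alpha> * L"
  have "B > 0" "s > 0"
    using assms by (auto simp: B_def s_def)
  have "distrib_fun ?M h s \<le> emeasure ?M {1..<B}"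
    unfolding distrib_fun_def s_def
    by (intro emeasure_mono radial_level_set_subset atLeastLessThan_in_sets_radial_measure)
      (use assms \<open>B > 0\<close> in auto)
  also have "\<dots> \<le> ennreal t"
  proof (cases "n * t \<le> 1")
    case True
    then have "B = 1"
      by (simp add: B_def max_def)
    then show ?thesis
      by simp
  next
    case False
    then have "B = (n * t) powr (1 / n)"
      by (simp add: B_def max_def)
    then show ?thesis
      using emeasure_radial_measure_atLeastLessThan_le[of n B] assms by (simp add: powr_powr)
  qed
  finally have "rearrangement ?M h t \<le> ennreal s"
    unfolding rearrangement_def using \<open>s > 0\<close> by (intro Inf_lower) auto
  then have "ennreal (t powr (1 / q)) * rearrangement ?M h t \<le> ennreal (t powr (1 / q) * s)"
    using \<open>s > 0\<close> by (simp add: ennreal_mult mult_left_mono)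
  moreover have "t powr (1 / q) * B powr -\<alpha> \<le> 1"
  proof -
    have "t powr (1 / q) \<le> max 1 (n * t) powr (1 / q)"
      using assms \<open>0 < q\<close> by (intro powr_mono2) (auto simp: le_max_iff_disj mult_le_cancel_right1)
    also have "\<dots> \<le> max 1 (n * t) powr (\<alpha> / n)"
      using \<open>1 / q \<le> \<alpha> / n\<close> by (intro powr_mono) auto
    also have "\<dots> = B powr \<alpha>"
      by (simp add: B_def powr_powr)
    finally show ?thesis
      using \<open>B > 0\<close> by (simp add: powr_minus field_simps)
  qed
  then have "t powr (1 / q) * s \<le> 1 * L"
    unfolding s_def mult.assoc [symmetric] using assms by (intro mult_right_mono) auto
  ultimately show ?thesis
    by (simp add: ennreal_leI order_trans)
qed

lemma lorentz_qinf_radial_le: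
  assumes "1 \<le> n" "0 < \<alpha>" "n / \<alpha> \<le> q" "0 \<le> K"
    and h: "\<And>x. 1 \<le> x \<Longrightarrow> \<bar>h x\<bar> \<le> x powr -\<alpha> * K"
  shows "lorentz_qinf (radial_measure n) q h \<le> ennreal K"
  unfolding lorentz_qinf_def
proof (rule SUP_least, rule ennreal_le_epsilon)
  fix t \<epsilon> :: real assume "t \<in> {0<..}" "0 < \<epsilon>"
  have "\<bar>h x\<bar> \<le> x powr -\<alpha> * (K + \<epsilon>)" if "1 \<le> x" for x
    using h[OF that] \<open>0 < \<epsilon>\<close> by (smt (verit) mult_left_mono powr_ge_zero)
  then show "ennreal (t powr (1 / q)) * rearrangement (radial_measure n) h t \<le> ennreal K + ennreal \<epsilon>"
    using rearrangement_radial_powr_bound[of n \<alpha> q "K + \<epsilon>" t h] assms \<open>t \<in> {0<..}\<close> \<open>0 < \<epsilon>\<close>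
    by (simp add: ennreal_plus)
qed

lemma set_integrable_radial_measure_atLeast:
  fixes g :: "real \<Rightarrow> 'b::{banach, second_countable_topology}"
  assumes "integrable (radial_measure n) g" "1 \<le> x"
  shows "set_integrable (radial_measure n) {x..} g"
proof -
  have "{x..} \<in> sets (radial_measure n)"
    using sets_radial_measure_Int[of "{x..}" n] assms(2) by (simp add: Int_absorb2 subset_eq)
  then show ?thesis
    unfolding set_integrable_def using assms(1) by (rule integrable_mult_indicator)
qed

lemma abs_R1_le:
  assumes "integrable (radial_measure n) (\<lambda>y. y powr -\<beta> * f y)" "1 \<le> x"
  shows "\<bar>R1 n \<alpha> \<beta> f x\<bar> \<le> x powr -\<alpha> * (\<integral>y. \<bar>y powr -\<beta> * f y\<bar> \<partial>radial_measure n)"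
proof -
  let ?g = "\<lambda>y. y powr -\<beta> * f y"
  have "\<bar>LINT y:{x..}|radial_measure n. ?g y\<bar> \<le> (LINT y:{x..}|radial_measure n. \<bar>?g y\<bar>)"
    using set_integral_norm_bound[OF set_integrable_radial_measure_atLeast[OF assms]] by simp
  also have "\<dots> \<le> (\<integral>y. \<bar>?g y\<bar> \<partial>radial_measure n)"
    unfolding set_lebesgue_integral_def
    using assms set_integrable_radial_measure_atLeast[of n "\<lambda>y. \<bar>?g y\<bar>" x]
    by (intro integral_mono) (auto simp: set_integrable_def indicator_def)
  finally show ?thesis
    unfolding R1_def by (simp add: abs_mult mult_left_mono)
qed

lemma borel_measurable_R1:
  assumes "0 < n1" and [measurable]: "f \<in> borel_measurable (radial_measure n1)"
  shows "R1 n1 \<alpha> \<beta> f \<in> borel_measurable (radial_measure n2)"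
proof -
  have [measurable]: "(\<lambda>y::real. y powr -\<beta>) \<in> borel_measurable (radial_measure n1)"
    "(\<lambda>x::real. x) \<in> borel_measurable (radial_measure n2)"
    "(\<lambda>x::real. x powr -\<alpha>) \<in> borel_measurable (radial_measure n2)"
    by (auto intro: borel_measurable_radial_measure)
  have "R1 n1 \<alpha> \<beta> f = (\<lambda>x. x powr -\<alpha> * (\<integral>y. (if x \<le> y then y powr -\<beta> * f y else 0) \<partial>radial_measure n1))"
    unfolding R1_def set_lebesgue_integral_def
    by (auto intro!: ext Bochner_Integration.integral_cong simp: indicator_def)
  also have "\<dots> \<in> borel_measurable (radial_measure n2)"
    using sigma_finite_measure.borel_measurable_lebesgue_integral[OF sigma_finite_radial_measure[OF assms(1)]]
    by measurable
  finally show ?thesis .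
qed

theorem lemma2p3:
  fixes n1 n2 \<alpha> \<beta> p q :: real
  assumes "n1 > 1" and "n2 > 1"
    and "0 < \<beta>" and "\<beta> < n1" and "\<alpha> > 0"
    and "1 < p" and "p \<le> n1 / (n1 - \<beta>)"
    and "q \<ge> n2 / \<alpha>"
  shows "\<exists>C::real. C \<ge> 0 \<and>
    (\<forall>f. f \<in> borel_measurable (radial_measure n1) \<longrightarrow>
         lorentz_p1 (radial_measure n1) p f < \<infinity> \<longrightarrow>
           (\<forall>x\<ge>1. set_integrable (radial_measure n1) {x..} (\<lambda>y. y powr (-\<beta>) * f y))
         \<and> R1 n1 \<alpha> \<beta> f \<in> borel_measurable (radial_measure n2)
         \<and> lorentz_qinf (radial_measure n2) q (R1 n1 \<alpha> \<beta> f)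
             \<le> ennreal C * lorentz_p1 (radial_measure n1) p f)"
proof (intro exI[of _ "1 + 1 / (n1 - \<beta>)"] conjI allI impI)
  let ?M = "radial_measure n1"
  let ?C = "1 + 1 / (n1 - \<beta>)"
  show "?C \<ge> 0"
    using assms by simp
  fix f assume f [measurable]: "f \<in> borel_measurable ?M" and fin: "lorentz_p1 ?M p f < \<infinity>"
  let ?g = "\<lambda>y. y powr -\<beta> * f y"
  have [measurable]: "(\<lambda>y::real. y powr -\<beta>) \<in> borel_measurable ?M"
    by (rule borel_measurable_radial_measure) simp
  have g_norm: "(\<integral>\<^sup>+ y. ennreal (norm (?g y)) \<partial>?M) \<le> ennreal ?C * lorentz_p1 ?M p f"
    using nn_integral_radial_powr_le_lorentz_p1[of \<beta> n1 p f] assms f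
    by (simp add: abs_mult ennreal_mult mult.commute)
  then have g_int: "integrable ?M ?g"
    using fin by (intro integrableI_bounded) (auto simp: ennreal_mult_less_top intro: le_less_trans)
  then show "set_integrable ?M {x..} ?g" if "1 \<le> x" for x
    using that by (rule set_integrable_radial_measure_atLeast)
  show "R1 n1 \<alpha> \<beta> f \<in> borel_measurable (radial_measure n2)"
    using assms by (intro borel_measurable_R1) auto
  have "lorentz_qinf (radial_measure n2) q (R1 n1 \<alpha> \<beta> f) \<le> ennreal (\<integral>y. \<bar>?g y\<bar> \<partial>?M)"
    using assms abs_R1_le[OF g_int] by (intro lorentz_qinf_radial_le) auto
  also have "\<dots> = (\<integral>\<^sup>+ y. ennreal (norm (?g y)) \<partial>?M)"
    using g_int by (simp add: nn_integral_eq_integral)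
  finally show "lorentz_qinf (radial_measure n2) q (R1 n1 \<alpha> \<beta> f) \<le> ennreal ?C * lorentz_p1 ?M p f"
    using g_norm by simp
qed

end
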